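(* Let $A\in GL_n(\mathbb{C})$ have all eigenvalues equal to $1$. Then $J(A\otimes A)\leqslant J(A)$ and $J(A\otimes A)\leqslant J(A)^2+(1-J(A))^2$.
   Context: For $B\in GL_N(\mathbb{C})$, $J(B)$ denotes the number of Jordan blocks in the Jordan normal form of $B$ divided by $N$. $A\otimes A\in GL_{n^2}(\mathbb{C})$ is the Kronecker product. *)

theory Defs
  imports "Jordan_Normal_Form.Jordan_Normal_Form_Uniqueness"
begin

definition kron_mat :: "'a :: times mat \<Rightarrow> 'a mat \<Rightarrow> 'a mat" where
  "kron_mat A B = mat (dim_row A * dim_row B) (dim_col A * dim_col B)
     (\<lambda>(i, j). A $$ (i div dim_row B, j div dim_col B) * B $$ (i mod dim_row B, j mod dim_col B))"

text \<open>Number of Jordan blocks of a square complex matrix (well defined by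
  existence and uniqueness of the Jordan normal form up to block permutation).\<close>
definition num_jordan_blocks :: "complex mat \<Rightarrow> nat" where
  "num_jordan_blocks B = length (SOME n_as. jordan_nf B n_as)"

definition J :: "complex mat \<Rightarrow> real" where
  "J B = real (num_jordan_blocks B) / real (dim_row B)"

end

theory Submission
  imports Defs "Jordan_Normal_Form.DL_Rank" "Jordan_Normal_Form.Jordan_Normal_Form_Existence"
begin

text \<open>A is similar to the unipotent Jordan matrix U of size N with k blocks, so A \<otimes> A is
  similar to U \<otimes> U, which is again unipotent; hence its number of Jordan blocks is the dimension
  of the kernel of U \<otimes> U - 1. Read a kernel vector as an N \<times> N array x. The equation
  (U \<otimes> U) x = x at position (a, b) determines row a + 1 from row a whenever a + 1 lies in the
  block of a, and in a row forming a 1 \<times> 1 block it forces x(a, b) = 0 unless b starts a block.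
  So x is determined by its entries in block-start rows, minus those killed in 1 \<times> 1 rows:
  k N - p (N - k) coordinates, where the number p of 1 \<times> 1 blocks is at least 2 k - N because
  there are as many block ends as block starts. This number is at most k N and at most
  k^2 + (N - k)^2.\<close>

section \<open>Kronecker products\<close>

lemma sum_lessThan_mult:
  fixes g :: "nat \<Rightarrow> 'a :: comm_monoid_add"
  shows "(\<Sum>j<n * m. g j) = (\<Sum>a<n. \<Sum>b<m. g (a * m + b))"
proof -
  have "(\<Sum>j\<in>{a * m..<a * m + m}. g j) = (\<Sum>b<m. g (a * m + b))" for a
    using sum.shift_bounds_nat_ivl[of g 0 "a * m" m] by (simp add: atLeast0LessThan add.commute)
  thus ?thesis by (simp add: sum.nat_group[symmetric])
qed

lemma mult_add_less_mult:
  fixes a b n m :: nat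
  assumes "a < n" "b < m"
  shows "a * m + b < n * m"
proof -
  have "a * m + b < Suc a * m" using assms(2) by simp
  also have "\<dots> \<le> n * m" using assms(1) by (intro mult_le_mono1) simp
  finally show ?thesis .
qed

lemma div_mod_less_of_less_mult:
  fixes i n m :: nat
  assumes "i < n * m"
  shows "i div m < n" "i mod m < m"
proof -
  have "0 < m" using assms by (cases m) auto
  thus "i div m < n" "i mod m < m" using assms by (auto simp: less_mult_imp_div_less)
qed

lemma dim_kron_mat [simp]:
  "dim_row (kron_mat A B) = dim_row A * dim_row B"
  "dim_col (kron_mat A B) = dim_col A * dim_col B"
  unfolding kron_mat_def by auto

lemma index_kron_mat:
  "i < dim_row A * dim_row B \<Longrightarrow> j < dim_col A * dim_col B \<Longrightarrow>
   kron_mat A B $$ (i, j) =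
     A $$ (i div dim_row B, j div dim_col B) * B $$ (i mod dim_row B, j mod dim_col B)"
  unfolding kron_mat_def by auto

lemma index_kron_mat_pair:
  assumes "A \<in> carrier_mat n n'" "B \<in> carrier_mat m m'" "a < n" "b < m" "c < n'" "d < m'"
  shows "kron_mat A B $$ (a * m + b, c * m' + d) = A $$ (a, c) * B $$ (b, d)"
  using assms by (simp add: index_kron_mat mult_add_less_mult)

lemma kron_mat_carrier:
  "A \<in> carrier_mat n n \<Longrightarrow> B \<in> carrier_mat m m \<Longrightarrow> kron_mat A B \<in> carrier_mat (n * m) (n * m)"
  by auto

lemma kron_mat_mult:
  fixes A C :: "'a :: comm_ring_1 mat"
  assumes A: "A \<in> carrier_mat n n" and C: "C \<in> carrier_mat n n"
    and B: "B \<in> carrier_mat m m" and D: "D \<in> carrier_mat m m"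
  shows "kron_mat (A * C) (B * D) = kron_mat A B * kron_mat C D"
proof (rule eq_matI)
  fix i j
  assume "i < dim_row (kron_mat A B * kron_mat C D)" "j < dim_col (kron_mat A B * kron_mat C D)"
  hence i: "i < n * m" and j: "j < n * m" using A B C D by auto
  note ii = div_mod_less_of_less_mult[OF i] and jj = div_mod_less_of_less_mult[OF j]
  have "(kron_mat A B * kron_mat C D) $$ (i, j) =
      (\<Sum>t<n * m. kron_mat A B $$ (i, t) * kron_mat C D $$ (t, j))"
    using A B C D i j by (simp add: scalar_prod_def row_def col_def lessThan_atLeast0)
  also have "\<dots> = (\<Sum>u<n. \<Sum>v<m. (A $$ (i div m, u) * C $$ (u, j div m)) *
      (B $$ (i mod m, v) * D $$ (v, j mod m)))"
    unfolding sum_lessThan_mult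
  proof (intro sum.cong refl)
    fix u v assume "u \<in> {..<n}" "v \<in> {..<m}"
    hence "u * m + v < n * m" "(u * m + v) div m = u" "(u * m + v) mod m = v"
      by (auto simp: mult_add_less_mult)
    thus "kron_mat A B $$ (i, u * m + v) * kron_mat C D $$ (u * m + v, j) =
        (A $$ (i div m, u) * C $$ (u, j div m)) * (B $$ (i mod m, v) * D $$ (v, j mod m))"
      using A B C D i j by (simp add: index_kron_mat ac_simps)
  qed
  also have "\<dots> = (A * C) $$ (i div m, j div m) * (B * D) $$ (i mod m, j mod m)"
    using A B C D ii jj
    by (simp add: sum_product scalar_prod_def row_def col_def lessThan_atLeast0)
  also have "\<dots> = kron_mat (A * C) (B * D) $$ (i, j)"
    using A B C D i j by (simp add: index_kron_mat)
  finally show "kron_mat (A * C) (B * D) $$ (i, j) = (kron_mat A B * kron_mat C D) $$ (i, j)" ..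
qed (use A B C D in auto)

lemma kron_mat_one: "kron_mat (1\<^sub>m n) (1\<^sub>m m) = (1\<^sub>m (n * m) :: 'a :: comm_ring_1 mat)"
proof (rule eq_matI)
  fix i j assume "i < dim_row (1\<^sub>m (n * m) :: 'a mat)" "j < dim_col (1\<^sub>m (n * m) :: 'a mat)"
  hence i: "i < n * m" and j: "j < n * m" by auto
  have "i = j \<longleftrightarrow> i div m = j div m \<and> i mod m = j mod m"
    by (metis div_mult_mod_eq)
  thus "kron_mat (1\<^sub>m n) (1\<^sub>m m) $$ (i, j) = (1\<^sub>m (n * m) :: 'a mat) $$ (i, j)"
    using i j div_mod_less_of_less_mult[OF i] div_mod_less_of_less_mult[OF j]
    by (simp add: index_kron_mat)
qed auto

lemma similar_mat_kron_mat:
  fixes A B C D :: "'a :: comm_ring_1 mat"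
  assumes "similar_mat A B" and "similar_mat C D"
  shows "similar_mat (kron_mat A C) (kron_mat B D)"
proof -
  obtain n P Q where AB: "{A, B, P, Q} \<subseteq> carrier_mat n n" "P * Q = 1\<^sub>m n" "Q * P = 1\<^sub>m n"
    and A: "A = P * B * Q" using similar_matD[OF assms(1)] by auto
  obtain m R S where CD: "{C, D, R, S} \<subseteq> carrier_mat m m" "R * S = 1\<^sub>m m" "S * R = 1\<^sub>m m"
    and C: "C = R * D * S" using similar_matD[OF assms(2)] by auto
  have "kron_mat A C = kron_mat (P * B) (R * D) * kron_mat Q S"
    unfolding A C by (rule kron_mat_mult[of _ n _ _ m]) (use AB CD in auto)
  also have "kron_mat (P * B) (R * D) = kron_mat P R * kron_mat B D"
    by (rule kron_mat_mult[of _ n _ _ m]) (use AB CD in auto)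
  finally have "kron_mat A C = kron_mat P R * kron_mat B D * kron_mat Q S" .
  moreover have "kron_mat P R * kron_mat Q S = 1\<^sub>m (n * m)"
    "kron_mat Q S * kron_mat P R = 1\<^sub>m (n * m)"
    using AB CD by (auto simp: kron_mat_mult[of _ n _ _ m, symmetric] kron_mat_one)
  moreover have
    "{kron_mat A C, kron_mat B D, kron_mat P R, kron_mat Q S} \<subseteq> carrier_mat (n * m) (n * m)"
    using AB CD by (auto intro: kron_mat_carrier)
  ultimately show ?thesis by (intro similar_matI) auto
qed

lemma mult_vec_kron_mat:
  assumes A: "A \<in> carrier_mat n n'" and B: "B \<in> carrier_mat m m'"
    and v: "v \<in> carrier_vec (n' * m')" and a: "a < n" and b: "b < m"
  shows "(kron_mat A B *\<^sub>v v) $ (a * m + b) =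
    (\<Sum>c<n'. \<Sum>d<m'. A $$ (a, c) * B $$ (b, d) * v $ (c * m' + d))"
proof -
  have "(kron_mat A B *\<^sub>v v) $ (a * m + b) =
      (\<Sum>t<n' * m'. kron_mat A B $$ (a * m + b, t) * v $ t)"
    using A B v a b by (simp add: mult_add_less_mult scalar_prod_def row_def lessThan_atLeast0)
  also have "\<dots> = (\<Sum>c<n'. \<Sum>d<m'. A $$ (a, c) * B $$ (b, d) * v $ (c * m' + d))"
    unfolding sum_lessThan_mult using A B a b
    by (intro sum.cong refl) (simp add: index_kron_mat_pair)
  finally show ?thesis .
qed

lemma upper_triangular_kron_mat:
  fixes A B :: "'a :: semiring_0 mat"
  assumes A: "A \<in> carrier_mat n n" and B: "B \<in> carrier_mat m m"
    and "upper_triangular A" and "upper_triangular B"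
  shows "upper_triangular (kron_mat A B)"
proof (rule upper_triangularI)
  fix i j assume ji: "j < i" and "i < dim_row (kron_mat A B)"
  hence i: "i < n * m" and j: "j < n * m" using A B by auto
  have "j div m < i div m \<or> (j div m = i div m \<and> j mod m < i mod m)"
  proof (cases "j div m = i div m")
    case True
    hence "j div m * m = i div m * m" by simp
    thus ?thesis using True ji div_mult_mod_eq[of i m] div_mult_mod_eq[of j m] by linarith
  qed (use ji div_le_mono[of j i m] in auto)
  thus "kron_mat A B $$ (i, j) = 0"
    using assms i j div_mod_less_of_less_mult[OF i] div_mod_less_of_less_mult[OF j]
    by (auto simp: index_kron_mat upper_triangularD)
qed

section \<open>Bounding the dimension of a kernel\<close>

lemma kernel_dim_le_of_inj:
  fixes C :: "'a::field mat"
  assumes C: "C \<in> carrier_mat nr nc" and P: "P \<in> carrier_mat d nc"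
    and inj: "\<And>v. v \<in> mat_kernel C \<Longrightarrow> P *\<^sub>v v = 0\<^sub>v d \<Longrightarrow> v = 0\<^sub>v nc"
  shows "kernel_dim C \<le> d"
proof -
  interpret K: kernel nr nc C by (unfold_locales, rule C)
  interpret W: vec_space "TYPE('a)" d .
  have ker_carrier: "v \<in> carrier_vec nc" if "v \<in> mat_kernel C" for v
    using mat_kernelD[OF C that] by blast
  interpret L0: linear_map class_ring K.VK W.V "(*\<^sub>v) P"
    by unfold_locales
      (use P ker_carrier in \<open>auto simp: module_hom_def mult_add_distrib_mat_vec mult_mat_vec\<close>)
  let ?I = "W.vs L0.imT"
  interpret I: vectorspace class_ring ?I by (rule W.subspace_is_vs[OF L0.imT_is_subspace])
  interpret L: linear_map class_ring K.VK ?I "(*\<^sub>v) P"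
    by unfold_locales
      (use P ker_carrier in
        \<open>auto simp: module_hom_def L0.im_def mult_add_distrib_mat_vec mult_mat_vec\<close>)
  obtain B where "finite B" "K.basis B" using kernel_basis_exists[OF C] by blast
  hence fin: "K.Ker.fin_dim" unfolding K.Ker.fin_dim_def K.Ker.basis_def by auto
  have "inj_on ((*\<^sub>v) P) (mat_kernel C)"
  proof (rule inj_onI)
    fix x y
    assume x: "x \<in> mat_kernel C" and y: "y \<in> mat_kernel C" and e: "P *\<^sub>v x = P *\<^sub>v y"
    have xc: "x \<in> carrier_vec nc" and yc: "y \<in> carrier_vec nc"
      using x y by (auto intro: ker_carrier)
    have "C *\<^sub>v (x - y) = 0\<^sub>v nr"
      using C xc yc mat_kernelD[OF C x] mat_kernelD[OF C y]
      by (simp add: mult_minus_distrib_mat_vec)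
    hence "x - y \<in> mat_kernel C" using C xc yc by (auto intro: mat_kernelI)
    moreover have "P *\<^sub>v (x - y) = 0\<^sub>v d"
      using P xc yc e by (simp add: mult_minus_distrib_mat_vec)
    ultimately have "x - y = 0\<^sub>v nc" by (rule inj)
    thus "x = y" using xc yc by (intro eq_vecI) (auto simp: vec_eq_iff)
  qed
  hence "kernel_dim C = I.dim" using L.dim_eq[OF fin] by (simp add: L0.im_def)
  also have "\<dots> \<le> W.dim"
    by (rule W.subspace_dim[OF L0.imT_is_subspace W.fin_dim L.image_fin_dim[OF fin]])
      (auto simp: L0.im_def)
  finally show ?thesis by (simp add: W.dim_is_n)
qed

lemma kernel_dim_le_card_coordinates:
  fixes C :: "'a::field mat"
  assumes C: "C \<in> carrier_mat nr nc" and I: "I \<subseteq> {..<nc}"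
    and determined:
      "\<And>v. v \<in> mat_kernel C \<Longrightarrow> (\<And>i. i \<in> I \<Longrightarrow> v $ i = 0) \<Longrightarrow> v = 0\<^sub>v nc"
  shows "kernel_dim C \<le> card I"
proof -
  define xs where "xs = sorted_list_of_set I"
  have xs: "set xs = I" "length xs = card I"
    using finite_subset[OF I] by (simp_all add: xs_def)
  define P where "P = mat (card I) nc (\<lambda>(r, c). of_bool (c = xs ! r) :: 'a)"
  have P: "P \<in> carrier_mat (card I) nc" unfolding P_def by simp
  have P_mult: "(P *\<^sub>v v) $ r = v $ (xs ! r)"
    if v: "v \<in> carrier_vec nc" and r: "r < card I" for v r
  proof -
    have "xs ! r < nc" using I r xs nth_mem[of r xs] by auto
    thus ?thesis using v r unfolding P_def
      by (simp add: scalar_prod_def row_def lessThan_atLeast0[symmetric] sum.delta')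
  qed
  show ?thesis
  proof (rule kernel_dim_le_of_inj[OF C P])
    fix v assume v: "v \<in> mat_kernel C" and Pv: "P *\<^sub>v v = 0\<^sub>v (card I)"
    show "v = 0\<^sub>v nc"
    proof (rule determined[OF v])
      fix i assume "i \<in> I"
      then obtain r where r: "r < card I" "xs ! r = i" using xs by (metis in_set_conv_nth)
      have "v \<in> carrier_vec nc" using mat_kernelD[OF C v] by blast
      thus "v $ i = 0" using P_mult[of v r] Pv r by simp
    qed
  qed
qed

lemma mult_mat_vec_eq_of_mem_kernel_char_matrix:
  fixes M :: "'a::field mat"
  assumes M: "M \<in> carrier_mat n n" and v: "v \<in> mat_kernel (char_matrix M 1)"
  shows "M *\<^sub>v v = v"
proof -
  have vc: "v \<in> carrier_vec n" and "char_matrix M 1 *\<^sub>v v = 0\<^sub>v n"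
    using mat_kernelD[OF char_matrix_closed[OF M] v] by auto
  moreover have "char_matrix M 1 = M - 1\<^sub>m n"
    using M by (intro eq_matI) (auto simp: char_matrix_def)
  ultimately have "M *\<^sub>v v - v = 0\<^sub>v n"
    using M by (simp add: minus_mult_distrib_mat_vec[of _ n n])
  thus ?thesis using M vc by (intro eq_vecI) (auto simp: vec_eq_iff)
qed

section \<open>Jordan normal forms and eigenvalues\<close>

lemma eigenvalue_jordan_nf_block:
  fixes A :: "'a :: field mat"
  assumes A: "A \<in> carrier_mat n n" and jnf: "jordan_nf A n_as" and me: "(m, e) \<in> set n_as"
  shows "eigenvalue A e"
proof -
  have "0 < m" using jnf me unfolding jordan_nf_def by force
  have "similar_mat A (jordan_matrix n_as)" using jnf unfolding jordan_nf_def by simp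
  hence "char_poly A = (\<Prod>(m, a)\<leftarrow>n_as. [:- a, 1:] ^ m)"
    by (simp add: char_poly_similar jordan_matrix_char_poly)
  moreover have "[:- e, 1:] ^ m \<in> set (map (\<lambda>(m, a). [:- a, 1:] ^ m) n_as)"
    using me by (auto intro: rev_image_eqI)
  hence "poly (\<Prod>(m, a)\<leftarrow>n_as. [:- a, 1:] ^ m) e = 0"
    by (intro poly_prod_list_zero_iff[THEN iffD2] bexI) (simp_all add: \<open>0 < m\<close>)
  ultimately show ?thesis using eigenvalue_root_char_poly[OF A] by simp
qed

lemma eigenvalue_upper_triangular:
  fixes A :: "'a :: field mat"
  assumes A: "A \<in> carrier_mat n n" and "upper_triangular A" and "eigenvalue A e"
  shows "e \<in> set (diag_mat A)"
  using assms eigenvalue_root_char_poly[OF A] char_poly_upper_triangular[OF A]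
  by (auto simp: poly_prod_list_zero_iff)

lemma length_jordan_nf_eigenvalue:
  assumes "jordan_nf A n_as"
  shows "length [(m, e)\<leftarrow>n_as. e = ev] = dim_gen_eigenspace A ev 1"
proof -
  have "\<forall>m\<in>set (map fst n_as). 0 < m" using assms unfolding jordan_nf_def by force
  hence "(\<Sum>m\<leftarrow>map fst [(m, e)\<leftarrow>n_as. e = ev]. min 1 m) = length [(m, e)\<leftarrow>n_as. e = ev]"
    by (induction n_as) auto
  thus ?thesis using dim_gen_eigenspace[OF assms] by simp
qed

lemma jordan_nf_some:
  fixes A :: "complex mat"
  assumes "A \<in> carrier_mat n n"
  shows "jordan_nf A (SOME n_as. jordan_nf A n_as)"
proof -
  obtain as where "char_poly A = (\<Prod>a\<leftarrow>as. [:- a, 1:])"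
    using char_poly_factorized[OF assms] by blast
  thus ?thesis using jordan_nf_exists[OF assms] by (blast intro: someI_ex)
qed

lemma num_jordan_blocks_unipotent:
  fixes A :: "complex mat"
  assumes A: "A \<in> carrier_mat n n" and ev: "\<And>e. eigenvalue A e \<Longrightarrow> e = 1"
  shows "num_jordan_blocks A = dim_gen_eigenspace A 1 1"
proof -
  define n_as where "n_as = (SOME n_as. jordan_nf A n_as)"
  have jnf: "jordan_nf A n_as" unfolding n_as_def by (rule jordan_nf_some[OF A])
  have "[(m, e)\<leftarrow>n_as. e = 1] = n_as"
    using eigenvalue_jordan_nf_block[OF A jnf] ev by (auto simp: filter_id_conv)
  thus ?thesis
    using length_jordan_nf_eigenvalue[OF jnf, of 1] by (simp add: num_jordan_blocks_def n_as_def)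
qed

lemma eigenvalue_similar_mat:
  fixes A B :: "'a :: field mat"
  assumes A: "A \<in> carrier_mat n n" and sim: "similar_mat A B" and "eigenvalue A e"
  shows "eigenvalue B e"
proof -
  have "B \<in> carrier_mat n n" using similar_matD[OF sim] A by auto
  thus ?thesis using assms char_poly_similar[OF sim] by (simp add: eigenvalue_root_char_poly)
qed

section \<open>Unipotent Jordan matrices\<close>

definition block_continues :: "nat \<Rightarrow> nat set \<Rightarrow> nat \<Rightarrow> bool" where
  "block_continues N S i \<longleftrightarrow> Suc i < N \<and> Suc i \<notin> S"

text \<open>The Jordan matrix with all eigenvalues 1 whose blocks start at the positions in S:
  the superdiagonal entry in column j is 1 unless j starts a new block.\<close>

definition unipotent_jordan_mat :: "nat \<Rightarrow> nat set \<Rightarrow> 'a :: zero_neq_one mat" where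
  "unipotent_jordan_mat N S = mat N N (\<lambda>(i, j). of_bool (i = j \<or> (j = Suc i \<and> j \<notin> S)))"

lemma dim_unipotent_jordan_mat [simp]:
  "dim_row (unipotent_jordan_mat N S) = N" "dim_col (unipotent_jordan_mat N S) = N"
  unfolding unipotent_jordan_mat_def by simp_all

lemma unipotent_jordan_mat_carrier [simp]: "unipotent_jordan_mat N S \<in> carrier_mat N N"
  by (rule carrier_matI) simp_all

lemma index_unipotent_jordan_mat:
  "i < N \<Longrightarrow> j < N \<Longrightarrow>
    unipotent_jordan_mat N S $$ (i, j) = of_bool (i = j \<or> (j = Suc i \<and> j \<notin> S))"
  unfolding unipotent_jordan_mat_def by simp

lemma sum_row_unipotent_jordan_mat:
  fixes g :: "nat \<Rightarrow> 'a :: semiring_1"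
  assumes "i < N"
  shows "(\<Sum>j<N. unipotent_jordan_mat N S $$ (i, j) * g j) =
    g i + of_bool (block_continues N S i) * g (Suc i)"
proof -
  have "(\<Sum>j<N. unipotent_jordan_mat N S $$ (i, j) * g j) =
      (\<Sum>j<N. of_bool (j = i) * g j) +
      of_bool (Suc i \<notin> S) * (\<Sum>j<N. of_bool (j = Suc i) * g j)"
    unfolding sum_distrib_left sum.distrib[symmetric] using assms
    by (intro sum.cong) (auto simp: index_unipotent_jordan_mat)
  thus ?thesis using assms by (simp add: block_continues_def)
qed

lemma upper_triangular_unipotent_jordan_mat: "upper_triangular (unipotent_jordan_mat N S)"
  by (rule upper_triangularI) (simp add: index_unipotent_jordan_mat)

lemma diag_unipotent_jordan_mat: "i < N \<Longrightarrow> unipotent_jordan_mat N S $$ (i, i) = 1"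
  by (simp add: index_unipotent_jordan_mat)

fun jordan_block_starts :: "(nat \<times> 'a) list \<Rightarrow> nat set" where
  "jordan_block_starts [] = {}"
| "jordan_block_starts ((m, e) # n_as) = insert 0 ((+) m ` jordan_block_starts n_as)"

lemma zero_mem_jordan_block_starts: "n_as \<noteq> [] \<Longrightarrow> 0 \<in> jordan_block_starts n_as"
  by (cases n_as) auto

lemma jordan_block_starts_subset:
  "\<forall>(m, e)\<in>set n_as. 0 < m \<Longrightarrow> jordan_block_starts n_as \<subseteq> {..<sum_list (map fst n_as)}"
  by (induction n_as rule: jordan_block_starts.induct) auto

lemma card_jordan_block_starts:
  "\<forall>(m, e)\<in>set n_as. 0 < m \<Longrightarrow> card (jordan_block_starts n_as) = length n_as"
proof (induction n_as rule: jordan_block_starts.induct)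
  case (2 m e n_as)
  have "finite (jordan_block_starts n_as)"
    using jordan_block_starts_subset[of n_as] 2 finite_subset by auto
  moreover have "0 \<notin> (+) m ` jordan_block_starts n_as" using 2 by auto
  ultimately have
    "card (jordan_block_starts ((m, e) # n_as)) = Suc (card (jordan_block_starts n_as))"
    by (simp add: card_image)
  thus ?case using 2 by simp
qed simp

lemma jordan_matrix_unipotent:
  assumes "\<forall>(m, e)\<in>set n_as. e = 1"
  shows "jordan_matrix n_as =
    unipotent_jordan_mat (sum_list (map fst n_as)) (jordan_block_starts n_as)"
  using assms
proof (induction n_as rule: jordan_block_starts.induct)
  case 1
  show ?case by (rule eq_matI) (auto simp: jordan_matrix_def)
next
  case (2 m e n_as)
  define N where "N = sum_list (map fst n_as)"
  define S where "S = jordan_block_starts n_as"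
  have e: "e = 1" and IH: "jordan_matrix n_as = unipotent_jordan_mat N S"
    using 2 unfolding N_def S_def by auto
  have S0: "0 \<in> S" if "0 < N"
    using that zero_mem_jordan_block_starts[of n_as] by (cases n_as) (auto simp: S_def N_def)
  show ?case (is "_ = ?U")
  proof (rule eq_matI)
    fix i j assume "i < dim_row ?U" "j < dim_col ?U"
    hence i: "i < m + N" and j: "j < m + N" by (auto simp: N_def)
    have mem: "j \<in> insert 0 ((+) m ` S) \<longleftrightarrow> j = 0 \<or> (m \<le> j \<and> j - m \<in> S)" by force
    have U: "?U $$ (i, j) = of_bool (i = j \<or> (j = Suc i \<and> j \<notin> insert 0 ((+) m ` S)))"
      using i j by (simp add: index_unipotent_jordan_mat N_def S_def)
    have J: "jordan_matrix ((m, e) # n_as) $$ (i, j) =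
        (if i < m then if j < m then jordan_block m 1 $$ (i, j) else 0
         else if j < m then 0 else unipotent_jordan_mat N S $$ (i - m, j - m))"
      using i j by (simp add: jordan_matrix_Cons IH e N_def[symmetric])
    show "jordan_matrix ((m, e) # n_as) $$ (i, j) = ?U $$ (i, j)"
      unfolding U J using i j S0 mem by (auto simp: index_unipotent_jordan_mat)
  qed (auto simp: N_def)
qed

section \<open>The kernel of the Kronecker square\<close>

lemma kernel_kron_unipotent_jordan_mat_recurrence:
  fixes N :: nat and S :: "nat set" and v :: "'a :: field vec"
  defines "U \<equiv> unipotent_jordan_mat N S :: 'a mat"
  assumes v: "v \<in> mat_kernel (char_matrix (kron_mat U U) 1)" and a: "a < N" and b: "b < N"
  shows "of_bool (block_continues N S b) * v $ (a * N + Suc b) + of_bool (block_continues N S a) *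
    (v $ (Suc a * N + b) + of_bool (block_continues N S b) * v $ (Suc a * N + Suc b)) = 0"
proof -
  have U: "U \<in> carrier_mat N N" by (simp add: U_def)
  have K: "kron_mat U U \<in> carrier_mat (N * N) (N * N)" by (rule kron_mat_carrier[OF U U])
  have vc: "v \<in> carrier_vec (N * N)" using mat_kernelD[OF char_matrix_closed[OF K] v] by blast
  have "v $ (a * N + b) = (kron_mat U U *\<^sub>v v) $ (a * N + b)"
    using mult_mat_vec_eq_of_mem_kernel_char_matrix[OF K v] by simp
  also have "\<dots> = (\<Sum>c<N. \<Sum>d<N. U $$ (a, c) * U $$ (b, d) * v $ (c * N + d))"
    by (rule mult_vec_kron_mat[OF U U vc a b])
  also have "\<dots> = (\<Sum>c<N. U $$ (a, c) * (\<Sum>d<N. U $$ (b, d) * v $ (c * N + d)))"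
    by (simp add: sum_distrib_left mult.assoc)
  also have "\<dots> = (\<Sum>c<N. U $$ (a, c) *
      (v $ (c * N + b) + of_bool (block_continues N S b) * v $ (c * N + Suc b)))"
    unfolding U_def using b by (simp add: sum_row_unipotent_jordan_mat)
  also have "\<dots> = (v $ (a * N + b) + of_bool (block_continues N S b) * v $ (a * N + Suc b)) +
      of_bool (block_continues N S a) *
        (v $ (Suc a * N + b) + of_bool (block_continues N S b) * v $ (Suc a * N + Suc b))"
    unfolding U_def using a by (rule sum_row_unipotent_jordan_mat)
  finally show ?thesis by (simp add: add.assoc)
qed

definition block_ends :: "nat \<Rightarrow> nat set \<Rightarrow> nat set" where
  "block_ends N S = {i. i < N \<and> \<not> block_continues N S i}"

text \<open>The pair (a, b) stands for position a * N + b of a vector of length N * N. These coordinates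
  determine the kernel vectors of the Kronecker square minus the identity: rows starting a block,
  without the entries outside block-start columns in rows forming a 1 \<times> 1 block.\<close>

definition kron_kernel_coords :: "nat \<Rightarrow> nat set \<Rightarrow> (nat \<times> nat) set" where
  "kron_kernel_coords N S = S \<times> {..<N} - (S \<inter> block_ends N S) \<times> ({..<N} - S)"

text \<open>A row a \<notin> S is determined by the preceding row, by descending induction on the column;
  in a row a \<in> S the entries outside the coordinates are forced to vanish by the equation at
  position (a, b - 1).\<close>

lemma unipotent_recurrence_eq_zero:
  fixes x :: "nat \<Rightarrow> nat \<Rightarrow> 'a :: comm_ring_1"
  assumes S0: "0 < N \<Longrightarrow> 0 \<in> S"
    and rec: "\<And>a b. a < N \<Longrightarrow> b < N \<Longrightarrow>
      of_bool (block_continues N S b) * x a (Suc b) + of_bool (block_continues N S a) *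
        (x (Suc a) b + of_bool (block_continues N S b) * x (Suc a) (Suc b)) = 0"
    and coords: "\<And>a b. (a, b) \<in> kron_kernel_coords N S \<Longrightarrow> x a b = 0"
  shows "a < N \<Longrightarrow> b < N \<Longrightarrow> x a b = 0"
proof (induction a arbitrary: b rule: less_induct)
  case (less a)
  show ?case
  proof (cases "a \<in> S")
    case True
    show ?thesis
    proof (cases "(a, b) \<in> kron_kernel_coords N S")
      case False
      hence "\<not> block_continues N S a" "b \<notin> S"
        using True less.prems by (auto simp: kron_kernel_coords_def block_ends_def)
      moreover obtain b' where b: "b = Suc b'" using S0 \<open>b \<notin> S\<close> less.prems by (cases b) auto
      moreover have "block_continues N S b'"
        using b \<open>b \<notin> S\<close> less.prems by (simp add: block_continues_def)
      ultimately show ?thesis using rec[of a b'] less.prems by simp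
    qed (rule coords)
  next
    case False
    obtain a' where a: "a = Suc a'" using S0 False less.prems by (cases a) auto
    hence cont: "block_continues N S a'" using False less.prems by (simp add: block_continues_def)
    have prev: "x a' c = 0" if "c < N" for c using less.IH[of a' c] a less.prems that by simp
    show ?thesis using \<open>b < N\<close>
    proof (induction "N - b" arbitrary: b rule: less_induct)
      case less
      have "block_continues N S b \<Longrightarrow> x a (Suc b) = 0"
        using less.hyps[of "Suc b"] less.prems by (simp add: block_continues_def diff_less_mono2)
      thus ?case using rec[of a' b] less.prems cont prev a
        by (cases "block_continues N S b") (auto simp: block_continues_def)
    qed
  qed
qed

lemma kernel_dim_kron_unipotent_jordan_mat:
  fixes N :: nat and S :: "nat set"
  defines "U \<equiv> unipotent_jordan_mat N S :: 'a :: field mat"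
  assumes S: "S \<subseteq> {..<N}" and S0: "0 < N \<Longrightarrow> 0 \<in> S"
  shows "kernel_dim (char_matrix (kron_mat U U) 1) \<le> card (kron_kernel_coords N S)"
proof -
  let ?F = "kron_kernel_coords N S"
  define idx where "idx = (\<lambda>(a, b). a * N + b)"
  have F: "?F \<subseteq> {..<N} \<times> {..<N}" using S by (auto simp: kron_kernel_coords_def)
  have idx_inv: "idx p div N = fst p" "idx p mod N = snd p" if "p \<in> ?F" for p
    using that F by (auto simp: idx_def)
  have K: "kron_mat U U \<in> carrier_mat (N * N) (N * N)" by (simp add: U_def kron_mat_carrier)
  have "kernel_dim (char_matrix (kron_mat U U) 1) \<le> card (idx ` ?F)"
  proof (rule kernel_dim_le_card_coordinates[OF char_matrix_closed[OF K]])
    show "idx ` ?F \<subseteq> {..<N * N}" using F by (auto simp: idx_def mult_add_less_mult)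
    fix v assume v: "v \<in> mat_kernel (char_matrix (kron_mat U U) 1)"
      and zero: "\<And>i. i \<in> idx ` ?F \<Longrightarrow> v $ i = 0"
    have vanish: "v $ (a * N + b) = 0" if "a < N" "b < N" for a b
    proof (rule unipotent_recurrence_eq_zero[where x = "\<lambda>a b. v $ (a * N + b)", OF S0 _ _ that])
      show "(a, b) \<in> ?F \<Longrightarrow> v $ (a * N + b) = 0" for a b
        using zero[of "a * N + b"] by (force simp: idx_def)
    qed (use kernel_kron_unipotent_jordan_mat_recurrence[OF v[unfolded U_def]] in auto)
    have "v \<in> carrier_vec (N * N)" using mat_kernelD[OF char_matrix_closed[OF K] v] by blast
    moreover have "v $ i = 0" if "i < N * N" for i
      using vanish[of "i div N" "i mod N"] div_mod_less_of_less_mult[OF that] by simp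
    ultimately show "v = 0\<^sub>v (N * N)" by (intro eq_vecI) auto
  qed
  also have "card (idx ` ?F) = card ?F"
    by (intro card_image inj_onI) (metis idx_inv prod.expand)
  finally show ?thesis .
qed

lemma card_block_ends:
  assumes S: "S \<subseteq> {..<N}" and S0: "0 < N \<Longrightarrow> 0 \<in> S"
  shows "card (block_ends N S) = card S"
proof (cases "N = 0")
  case False
  have fin: "finite S" using S finite_subset by blast
  have "bij_betw Suc (block_ends N S) (insert N (S - {0}))"
    by (rule bij_betw_byWitness[where f' = "\<lambda>i. i - 1"])
      (use S False in \<open>auto simp: block_ends_def block_continues_def\<close>)
  hence "card (block_ends N S) = card (insert N (S - {0}))" by (rule bij_betw_same_card)
  also have "\<dots> = Suc (card S - 1)"
    using S S0 False fin by (subst card_insert_disjoint) (auto simp: card_Diff_singleton)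
  also have "\<dots> = card S" using S0 False fin by (cases "card S") auto
  finally show ?thesis .
qed (use S in \<open>simp add: block_ends_def\<close>)

lemma card_kron_kernel_coords:
  assumes S: "S \<subseteq> {..<N}" and S0: "0 < N \<Longrightarrow> 0 \<in> S"
  shows "card (kron_kernel_coords N S) \<le> card S * N"
    and "card (kron_kernel_coords N S) \<le> card S ^ 2 + (N - card S) ^ 2"
proof -
  let ?E = "block_ends N S"
  define k where "k = card S"
  define p where "p = card (S \<inter> ?E)" \<comment> \<open>the number of 1 \<times> 1 blocks\<close>
  have fin: "finite S" using S finite_subset by blast
  have k: "k \<le> N" unfolding k_def using card_mono[OF _ S] by simp
  have "card ({..<N} - S) = N - k" unfolding k_def using fin S by (simp add: card_Diff_subset)
  moreover have "p * (N - k) \<le> k * N"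
    using card_mono[OF fin, of "S \<inter> ?E"] by (intro mult_le_mono) (auto simp: p_def k_def)
  ultimately have card_eq: "card (kron_kernel_coords N S) + p * (N - k) = k * N"
    unfolding kron_kernel_coords_def using fin
    by (subst card_Diff_subset) (auto simp: card_cartesian_product p_def k_def)
  thus "card (kron_kernel_coords N S) \<le> card S * N" by (simp add: k_def)
  have "card (S \<union> ?E) \<le> N"
    using S card_mono[of "{..<N}" "S \<union> ?E"] by (auto simp: block_ends_def)
  moreover have "card (S \<union> ?E) + p = 2 * k"
    using card_Un_Int[OF fin, of ?E] card_block_ends[OF S S0]
    by (simp add: p_def k_def block_ends_def)
  ultimately have "k \<le> p + (N - k)" using k by linarith
  hence "k * (N - k) \<le> p * (N - k) + (N - k) * (N - k)" by (metis add_mult_distrib mult_le_mono1)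
  moreover have "k * N = k ^ 2 + k * (N - k)"
    using k by (simp add: power2_eq_square diff_mult_distrib2)
  ultimately show "card (kron_kernel_coords N S) \<le> card S ^ 2 + (N - card S) ^ 2"
    using card_eq by (simp add: power2_eq_square k_def)
qed

section \<open>Jordan blocks of the Kronecker square\<close>

lemma eigenvalue_kron_unipotent_jordan_mat:
  fixes e :: "'a :: field"
  assumes "eigenvalue (kron_mat (unipotent_jordan_mat N S) (unipotent_jordan_mat N S)) e"
  shows "e = 1"
proof -
  let ?K = "kron_mat (unipotent_jordan_mat N S) (unipotent_jordan_mat N S) :: 'a mat"
  have K: "?K \<in> carrier_mat (N * N) (N * N)" by (simp add: kron_mat_carrier)
  have "upper_triangular ?K"
    by (rule upper_triangular_kron_mat[of _ N _ N])
      (simp_all add: upper_triangular_unipotent_jordan_mat)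
  hence "e \<in> set (diag_mat ?K)" using eigenvalue_upper_triangular[OF K _ assms] by blast
  thus ?thesis using div_mod_less_of_less_mult
    by (auto simp: diag_mat_def index_kron_mat diag_unipotent_jordan_mat)
qed

lemma similar_unipotent_jordan_mat:
  fixes A :: "complex mat"
  assumes A: "A \<in> carrier_mat n n" and ev: "\<And>e. eigenvalue A e \<Longrightarrow> e = 1"
  obtains S where "S \<subseteq> {..<n}" "0 < n \<Longrightarrow> 0 \<in> S" "card S = num_jordan_blocks A"
    "similar_mat A (unipotent_jordan_mat n S)"
proof -
  define n_as where "n_as = (SOME n_as. jordan_nf A n_as)"
  have jnf: "jordan_nf A n_as" unfolding n_as_def by (rule jordan_nf_some[OF A])
  have pos: "\<forall>(m, e)\<in>set n_as. 0 < m" using jnf unfolding jordan_nf_def by force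
  have sim: "similar_mat A (jordan_matrix n_as)" using jnf unfolding jordan_nf_def by simp
  obtain n' P Q where "{A, jordan_matrix n_as, P, Q} \<subseteq> carrier_mat n' n'"
    using similar_matD[OF sim] by blast
  hence n: "sum_list (map fst n_as) = n"
    using A by (metis carrier_matD(1) insert_subset jordan_matrix_dim)
  have "\<forall>(m, e)\<in>set n_as. e = 1" using eigenvalue_jordan_nf_block[OF A jnf] ev by auto
  hence "jordan_matrix n_as = unipotent_jordan_mat n (jordan_block_starts n_as)"
    unfolding n[symmetric] by (rule jordan_matrix_unipotent)
  show thesis
  proof (rule that)
    show "jordan_block_starts n_as \<subseteq> {..<n}"
      using jordan_block_starts_subset[OF pos] n by simp
    show "0 \<in> jordan_block_starts n_as" if "0 < n"
      using that n zero_mem_jordan_block_starts[of n_as] by (cases n_as) auto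
    show "card (jordan_block_starts n_as) = num_jordan_blocks A"
      unfolding num_jordan_blocks_def n_as_def[symmetric]
      by (rule card_jordan_block_starts[OF pos])
    show "similar_mat A (unipotent_jordan_mat n (jordan_block_starts n_as))"
      using sim \<open>jordan_matrix n_as = _\<close> by simp
  qed
qed

lemma num_jordan_blocks_kron_le:
  fixes A :: "complex mat"
  assumes A: "A \<in> carrier_mat n n" and S: "S \<subseteq> {..<n}" "0 < n \<Longrightarrow> 0 \<in> S"
    and sim: "similar_mat A (unipotent_jordan_mat n S)"
  shows "num_jordan_blocks (kron_mat A A) \<le> card (kron_kernel_coords n S)"
proof -
  let ?U = "unipotent_jordan_mat n S :: complex mat"
  have simK: "similar_mat (kron_mat A A) (kron_mat ?U ?U)"
    by (rule similar_mat_kron_mat[OF sim sim])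
  have KA: "kron_mat A A \<in> carrier_mat (n * n) (n * n)" by (rule kron_mat_carrier[OF A A])
  have KU: "char_matrix (kron_mat ?U ?U) 1 \<in> carrier_mat (n * n) (n * n)"
    by (rule char_matrix_closed, rule kron_mat_carrier) simp_all
  have ev: "e = 1" if "eigenvalue (kron_mat A A) e" for e
    using eigenvalue_similar_mat[OF KA simK that] by (rule eigenvalue_kron_unipotent_jordan_mat)
  have "num_jordan_blocks (kron_mat A A) = dim_gen_eigenspace (kron_mat A A) 1 1"
    by (rule num_jordan_blocks_unipotent[OF KA ev])
  also have "\<dots> = kernel_dim (char_matrix (kron_mat ?U ?U) 1)"
    unfolding dim_gen_eigenspace_similar[OF simK] dim_gen_eigenspace_def using KU by simp
  also have "\<dots> \<le> card (kron_kernel_coords n S)"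
    by (rule kernel_dim_kron_unipotent_jordan_mat[OF S])
  finally show ?thesis .
qed

theorem mainTheorem13:
  fixes A :: "complex mat" and n :: nat
  assumes "A \<in> carrier_mat n n"
    and "invertible_mat A"
    and "\<And>a. eigenvalue A a \<Longrightarrow> a = 1"
  shows "J (kron_mat A A) \<le> J A \<and>
         J (kron_mat A A) \<le> (J A)\<^sup>2 + (1 - J A)\<^sup>2"
proof -
  obtain S where S: "S \<subseteq> {..<n}" "0 < n \<Longrightarrow> 0 \<in> S"
    and k: "card S = num_jordan_blocks A" and sim: "similar_mat A (unipotent_jordan_mat n S)"
    using similar_unipotent_jordan_mat[OF assms(1,3)] by blast
  define k d where "k = real (card S)" and "d = real (num_jordan_blocks (kron_mat A A))"
  have kn: "k \<le> n" using card_mono[OF _ S(1)] by (simp add: k_def)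
  have "d \<le> real (card S * n)" "d \<le> real (card S ^ 2 + (n - card S) ^ 2)"
    using num_jordan_blocks_kron_le[OF assms(1) S sim] card_kron_kernel_coords[OF S]
    unfolding d_def of_nat_le_iff by linarith+
  hence d: "d \<le> k * n" "d \<le> k\<^sup>2 + (n - k)\<^sup>2" using kn by (simp_all add: k_def of_nat_diff)
  have JA: "J A = k / n" and JK: "J (kron_mat A A) = d / (n * n)"
    using assms(1) k by (simp_all add: J_def k_def d_def)
  show ?thesis
  proof (cases "n = 0")
    case False
    have "d / (n * n) \<le> k * n / (n * n)" using d(1) by (rule divide_right_mono) simp
    moreover have "d / (n * n) \<le> (k\<^sup>2 + (n - k)\<^sup>2) / (n * n)"
      using d(2) by (rule divide_right_mono) simp
    moreover have "(k\<^sup>2 + (n - k)\<^sup>2) / (n * n) = (k / n)\<^sup>2 + (1 - k / n)\<^sup>2"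
      using False by (simp add: field_simps power2_eq_square)
    ultimately show ?thesis using False by (simp add: JA JK)
  qed (simp add: JA JK)
qed

end
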